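(* Let $M$ be a smooth manifold of dimension $n$. Every effective first-order Lagrangian $\omega\in\Omega^n(J^1M)$ (for one scalar field $\phi$) is locally of the form $\omega=L\,dq^1\wedge\dots\wedge dq^n$ for some $L=L(q^\mu,u,p_\mu)\in C^\infty(J^1M)$.
   Context: $J^1M$ is the first jet bundle of functions on $M$ with local coordinates $(q^\mu,u,p_\mu)$, $\mu=1,\dots,n$; for $\phi\in C^\infty(M)$, $j^1\phi=(q^\mu,\phi,\partial_{q^\mu}\phi)$. The Reeb field is $\chi=\partial_u$. The Monge–Ampère operator of $\omega\in\Omega^n(J^1M)$ is $\Delta_\omega\phi=(j^1\phi)^*\omega$. An $n$-form $\omega\in\Omega^n(J^1M)$ is called a Lagrangian; it is a first-order Lagrangian if $\Delta_\omega\phi$ depends on $\phi$ only up to first-order derivatives. A form $\omega$ of degree $k\le n$ is effective if $\chi\lrcorner\omega=0$ and $\bot\omega=0$, where $\bot\alpha=\partial_{p_\mu}\lrcorner\partial_{q^\mu}\lrcorner\alpha$ (summed) for $\deg\alpha>1$ and $\bot\alpha=0$ otherwise. *)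

theory Defs
  imports "HOL-Analysis.Analysis"
begin

text \<open>A coordinate chart of the n-manifold M is an open set
  U of real^'n (n = CARD('n)); over it J^1M is J1 U = U x R x R^n with
  coordinates (q^mu, u, p_mu). Points and tangent vectors of J^1M are of type 'n jet.\<close>

type_synonym 'n jet = "(real^'n) \<times> real \<times> (real^'n)"

definition J1 :: "(real^'n) set \<Rightarrow> ('n::finite) jet set" where
  "J1 U = U \<times> UNIV \<times> UNIV"

fun Ck_on :: "nat \<Rightarrow> 'a::euclidean_space set \<Rightarrow> ('a \<Rightarrow> real) \<Rightarrow> bool" where
  "Ck_on 0 S f = continuous_on S f"
| "Ck_on (Suc k) S f = (f differentiable_on S \<and>
      (\<forall>b\<in>Basis. Ck_on k S (\<lambda>x. frechet_derivative f (at x) b)))"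

definition Cinf_on :: "'a::euclidean_space set \<Rightarrow> ('a \<Rightarrow> real) \<Rightarrow> bool" where
  "Cinf_on S f = (\<forall>k. Ck_on k S f)"

definition dq_vec :: "'n::finite \<Rightarrow> 'n jet" where
  "dq_vec \<mu> = (axis \<mu> 1, 0, 0)"
definition dp_vec :: "'n::finite \<Rightarrow> 'n jet" where
  "dp_vec \<mu> = (0, 0, axis \<mu> 1)"
definition reeb :: "'n::finite jet" where
  "reeb = (0, 1, 0)"

text \<open>A differential k-form on S: at each point an alternating k-linear map,
  given on lists of k tangent vectors; with smooth coefficients.\<close>
definition is_form :: "'a::euclidean_space set \<Rightarrow> nat \<Rightarrow> ('a \<Rightarrow> 'a list \<Rightarrow> real) \<Rightarrow> bool" where
  "is_form S k \<omega> =
    ((\<forall>x\<in>S. \<forall>vs i. length vs = k \<longrightarrow> i < k \<longrightarrow> linear (\<lambda>v. \<omega> x (vs[i := v])))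
   \<and> (\<forall>x\<in>S. \<forall>vs i j. length vs = k \<longrightarrow> i < k \<longrightarrow> j < k \<longrightarrow> i \<noteq> j \<longrightarrow> vs!i = vs!j
          \<longrightarrow> \<omega> x vs = 0)
   \<and> (\<forall>vs. length vs = k \<longrightarrow> Cinf_on S (\<lambda>x. \<omega> x vs)))"

definition interior :: "'a \<Rightarrow> ('b \<Rightarrow> 'a list \<Rightarrow> real) \<Rightarrow> ('b \<Rightarrow> 'a list \<Rightarrow> real)" where
  "interior X \<omega> = (\<lambda>x vs. \<omega> x (X # vs))"

definition bot_op :: "('b \<Rightarrow> ('n::finite) jet list \<Rightarrow> real) \<Rightarrow> ('b \<Rightarrow> 'n jet list \<Rightarrow> real)" where
  "bot_op \<alpha> = (\<lambda>x vs. \<Sum>\<mu>\<in>UNIV. interior (dp_vec \<mu>) (interior (dq_vec \<mu>) \<alpha>) x vs)"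

text \<open>Effective k-form (k \<le> n): chi _| omega = 0 and bot omega = 0 (bot is 0 in degree \<le> 1).\<close>
definition effective :: "('n::finite) jet set \<Rightarrow> nat \<Rightarrow> ('n jet \<Rightarrow> 'n jet list \<Rightarrow> real) \<Rightarrow> bool" where
  "effective S k \<omega> =
    (k \<le> CARD('n)
   \<and> (\<forall>x\<in>S. \<forall>vs. length vs = k - 1 \<longrightarrow> interior reeb \<omega> x vs = 0)
   \<and> (1 < k \<longrightarrow> (\<forall>x\<in>S. \<forall>vs. length vs = k - 2 \<longrightarrow> bot_op \<omega> x vs = 0)))"

definition j1 :: "(real^'n \<Rightarrow> real) \<Rightarrow> real^'n \<Rightarrow> ('n::finite) jet" where
  "j1 \<phi> q = (q, \<phi> q, \<chi> \<mu>. frechet_derivative \<phi> (at q) (axis \<mu> 1))"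

definition MA_op :: "('n::finite jet \<Rightarrow> 'n jet list \<Rightarrow> real) \<Rightarrow> (real^'n \<Rightarrow> real)
                     \<Rightarrow> real^'n \<Rightarrow> (real^'n) list \<Rightarrow> real" where
  "MA_op \<omega> \<phi> q ws = \<omega> (j1 \<phi> q) (map (frechet_derivative (j1 \<phi>) (at q)) ws)"

definition first_order :: "(real^'n) set \<Rightarrow> ('n::finite jet \<Rightarrow> 'n jet list \<Rightarrow> real) \<Rightarrow> bool" where
  "first_order U \<omega> = (\<exists>F. \<forall>\<phi>. Cinf_on U \<phi> \<longrightarrow>
      (\<forall>q\<in>U. \<forall>ws. length ws = CARD('n) \<longrightarrow> MA_op \<omega> \<phi> q ws = F (j1 \<phi> q) ws))"

text \<open>The volume form dq^1 ^ ... ^ dq^n, for a fixed enumeration q^1..q^n of the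
  coordinates indexed by 'n.\<close>
definition qenum :: "nat \<Rightarrow> 'n::finite" where
  "qenum = (SOME e. bij_betw e {..<CARD('n)} UNIV)"

definition dq_vol :: "('n::finite) jet list \<Rightarrow> real" where
  "dq_vol vs = det (\<chi> a b. (fst (vs ! inv_into {..<CARD('n)} qenum b)) $ a)"

end

(* At a point x = (q, u, p) of J^1 M the Lagrangian is an alternating n-form A on R^n x R x R^n.
   Effectiveness says that A annihilates the Reeb field d/du and is primitive: its contraction with
   the bivector sum_mu d/dq^mu \<and> d/dp_mu vanishes. Testing the first-order condition on the
   quadratic functions q' |-> u + p.(q' - q) + (q' - q).H(q' - q)/2 with H symmetric, whose 1-jets at q
   equal x and have tangent vectors d/dq^i + p_i d/du + sum_j H_ij d/dp_j, shows that A takes the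
   same value on every Lagrangian graph of a symmetric H as on the horizontal plane H = 0.
   Hence A - A(d/dq^1, ..., d/dq^n) dq^1 \<and> ... \<and> dq^n is primitive and vanishes on all Lagrangian
   graphs, and such a form is zero. The latter is shown by induction on the number of conjugate
   pairs: the contractions of the form with d/dq^a, with d/dp_a and with both inherit both properties
   with respect to the remaining pairs; for the last one, the value X on a graph is pinned down by
   bordering H with a unit row at a, which together with primitivity gives (|N| + 1 - k) X = 0
   for k \<le> |N|. *)

theory Submission
  imports Defs
begin

section \<open>Multilinear alternating functions on lists of vectors\<close>

definition multilinear :: "nat \<Rightarrow> ('v::real_vector list \<Rightarrow> real) \<Rightarrow> bool" where
  "multilinear k B \<longleftrightarrow> (\<forall>vs i. length vs = k \<longrightarrow> i < k \<longrightarrow> linear (\<lambda>v. B (vs[i := v])))"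

definition alternating :: "nat \<Rightarrow> ('v list \<Rightarrow> real) \<Rightarrow> bool" where
  "alternating k B \<longleftrightarrow>
     (\<forall>vs i j. length vs = k \<longrightarrow> i < k \<longrightarrow> j < k \<longrightarrow> i \<noteq> j \<longrightarrow> vs!i = vs!j \<longrightarrow> B vs = 0)"

definition vanishes_on :: "nat \<Rightarrow> ('v list \<Rightarrow> real) \<Rightarrow> 'v set \<Rightarrow> bool" where
  "vanishes_on k B S \<longleftrightarrow> (\<forall>ws. length ws = k \<longrightarrow> set ws \<subseteq> S \<longrightarrow> B ws = 0)"

lemma multilinear_linear_slot:
  assumes "multilinear k B" "length xs + Suc (length ys) = k"
  shows "linear (\<lambda>v. B (xs @ v # ys))"
  using assms(1)[unfolded multilinear_def, rule_format, of "xs @ 0 # ys" "length xs"] assms(2)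
  by simp

lemma multilinear_add:
  assumes "multilinear k B" "length xs + Suc (length ys) = k"
  shows "B (xs @ (u + v) # ys) = B (xs @ u # ys) + B (xs @ v # ys)"
  using linear_add[OF multilinear_linear_slot[OF assms]] .

lemma multilinear_scale:
  assumes "multilinear k B" "length xs + Suc (length ys) = k"
  shows "B (xs @ (c *\<^sub>R v) # ys) = c * B (xs @ v # ys)"
  using linear_scale[OF multilinear_linear_slot[OF assms]] by simp

lemma multilinear_Cons:
  assumes "multilinear (Suc k) B"
  shows "multilinear k (\<lambda>zs. B (u # zs))"
  unfolding multilinear_def
proof (intro allI impI)
  fix vs :: "'a list" and i
  assume "length vs = k" "i < k"
  then show "linear (\<lambda>v. B (u # vs[i := v]))"
    using assms[unfolded multilinear_def, rule_format, of "u # vs" "Suc i"] by simp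
qed

lemma multilinear_diff_scaled:
  assumes "multilinear k A" "multilinear k D"
  shows "multilinear k (\<lambda>vs. A vs - c * D vs)"
  unfolding multilinear_def
proof (intro allI impI)
  fix vs :: "'a list" and i
  assume "length vs = k" "i < k"
  then have "linear (\<lambda>v. A (vs[i := v]))" "linear (\<lambda>v. D (vs[i := v]))"
    using assms unfolding multilinear_def by auto
  then show "linear (\<lambda>v. A (vs[i := v]) - c * D (vs[i := v]))"
    by (simp add: linear_iff algebra_simps)
qed

lemma alternating_Cons:
  assumes "alternating (Suc k) B"
  shows "alternating k (\<lambda>zs. B (u # zs))"
  unfolding alternating_def
proof (intro allI impI)
  fix vs :: "'a list" and i j
  assume "length vs = k" "i < k" "j < k" "i \<noteq> j" "vs!i = vs!j"
  then show "B (u # vs) = 0"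
    using assms[unfolded alternating_def, rule_format, of "u # vs" "Suc i" "Suc j"] by simp
qed

lemma alternating_not_distinct:
  assumes "alternating k B" "length vs = k" "\<not> distinct vs"
  shows "B vs = 0"
proof -
  from assms(3) obtain i j where "i < length vs" "j < length vs" "i \<noteq> j" "vs!i = vs!j"
    by (auto simp: distinct_conv_nth)
  with assms(1,2) show ?thesis unfolding alternating_def by blast
qed

lemma alternating_swap:
  assumes "multilinear k B" "alternating k B"
    and "length xs + length ys + length zs + 2 = k"
  shows "B (xs @ u # ys @ v # zs) = - B (xs @ v # ys @ u # zs)"
proof -
  define C where "C a b = B (xs @ a # ys @ b # zs)" for a b
  have diag: "C w w = 0" for w
    unfolding C_def by (rule alternating_not_distinct[OF assms(2)]) (use assms(3) in auto)
  have lin1: "C (a + a') b = C a b + C a' b" for a a' b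
    unfolding C_def by (rule multilinear_add[OF assms(1)]) (use assms(3) in simp)
  have lin2: "C a (b + b') = C a b + C a b'" for a b b'
    using multilinear_add[OF assms(1), of "xs @ a # ys" zs b b'] assms(3) by (simp add: C_def)
  have "0 = C (u + v) (u + v)" by (rule diag[symmetric])
  also have "\<dots> = C u u + C u v + (C v u + C v v)"
    by (simp only: lin1 lin2)
  also have "\<dots> = C u v + C v u"
    by (simp add: diag)
  finally have "C u v = - C v u" by simp
  then show ?thesis by (simp add: C_def)
qed

lemma alternating_move_to_front:
  assumes "multilinear k B" "alternating k B" "length xs + Suc (length ys) = k"
  shows "B (xs @ v # ys) = (-1) ^ length xs * B (v # xs @ ys)"
  using assms
proof (induction xs arbitrary: ys rule: rev_induct)
  case Nil
  then show ?case by simp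
next
  case (snoc x xs)
  have "B ((xs @ [x]) @ v # ys) = - B (xs @ v # [] @ x # ys)"
    using alternating_swap[OF snoc.prems(1,2), of xs "[]" ys x v] snoc.prems(3) by simp
  also have "\<dots> = - ((-1) ^ length xs * B (v # xs @ x # ys))"
    using snoc.IH[OF snoc.prems(1,2), of "x # ys"] snoc.prems(3) by simp
  finally show ?case by simp
qed

lemma alternating_move_pair_to_front:
  assumes "multilinear k B" "alternating k B" "length us + Suc (Suc (length vs)) = k"
  shows "B (us @ x # y # vs) = B (x # y # us @ vs)"
proof -
  have "B (us @ x # y # vs) = (-1) ^ length us * B ((x # us) @ y # vs)"
    using alternating_move_to_front[OF assms(1,2), of us "y # vs" x] assms(3) by simp
  also have "B ((x # us) @ y # vs) = (-1) ^ Suc (length us) * B (y # x # us @ vs)"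
    using alternating_move_to_front[OF assms(1,2), of "x # us" vs y] assms(3) by simp
  also have "B (y # x # us @ vs) = - B (x # y # us @ vs)"
    using alternating_swap[OF assms(1,2), of "[]" "[]" "us @ vs" y x] assms(3) by simp
  finally show ?thesis by simp
qed

lemma alternating_abs_eq_if_mset_eq:
  assumes "multilinear (length T) B" "alternating (length T) B" "mset w = mset T"
  shows "\<bar>B w\<bar> = \<bar>B T\<bar>"
  using assms
proof (induction T arbitrary: w B)
  case Nil
  then show ?case by simp
next
  case (Cons t T)
  then have "t \<in> set w" by (metis list.set_intros(1) set_mset_mset)
  then obtain xs ys where w: "w = xs @ t # ys" by (meson split_list)
  have "length w = Suc (length T)" using Cons.prems(3) by (metis length_Cons mset_eq_length)
  then have "\<bar>B w\<bar> = \<bar>B (t # xs @ ys)\<bar>"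
    using alternating_move_to_front[OF Cons.prems(1,2), of xs ys t] w by (simp add: abs_mult)
  also have "\<dots> = \<bar>B (t # T)\<bar>"
    using Cons.IH[of "\<lambda>zs. B (t # zs)" "xs @ ys"] Cons.prems w
      multilinear_Cons[of "length T" B t] alternating_Cons[of "length T" B t]
    by simp
  finally show ?case .
qed

lemma vanishes_on_subset: "vanishes_on k B S \<Longrightarrow> T \<subseteq> S \<Longrightarrow> vanishes_on k B T"
  by (auto simp: vanishes_on_def)

lemma multilinear_vanishes_on_span:
  assumes "multilinear k B" "vanishes_on k B S"
  shows "vanishes_on k B (span S)"
  unfolding vanishes_on_def
proof (intro allI impI)
  fix ws :: "'a list"
  assume "length ws = k" "set ws \<subseteq> span S"
  with assms show "B ws = 0"
  proof (induction ws arbitrary: k B)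
    case Nil
    then show ?case by (simp add: vanishes_on_def)
  next
    case (Cons v vs)
    have "B (u # vs) = 0" if "u \<in> S" for u
    proof -
      have "vanishes_on (length vs) (\<lambda>zs. B (u # zs)) S"
        using Cons.prems(2,3) that by (auto simp: vanishes_on_def)
      then show ?thesis
        using Cons.IH[of "length vs" "\<lambda>zs. B (u # zs)"] multilinear_Cons Cons.prems by auto
    qed
    moreover have "linear (\<lambda>a. B ([] @ a # vs))"
      by (rule multilinear_linear_slot[OF Cons.prems(1)]) (use Cons.prems(3) in simp)
    ultimately show ?case
      using real_vector.linear_eq_0_on_span[of "\<lambda>a. B (a # vs)" S v] Cons.prems(4) by simp
  qed
qed

lemma alternating_vanishes_on_insert:
  assumes "multilinear k B" "alternating k B" "vanishes_on k B S"
    and "\<And>k1. k = Suc k1 \<Longrightarrow> vanishes_on k1 (\<lambda>zs. B (u # zs)) S"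
  shows "vanishes_on k B (insert u S)"
  unfolding vanishes_on_def
proof (intro allI impI)
  fix ws
  assume ws: "length ws = k" "set ws \<subseteq> insert u S"
  show "B ws = 0"
  proof (cases "u \<in> set ws")
    case True
    then obtain xs ys where ws_eq: "ws = xs @ u # ys" by (meson split_list)
    have "B (u # xs @ ys) = 0"
    proof (cases "u \<in> set (xs @ ys)")
      case True
      then show ?thesis
        by (intro alternating_not_distinct[OF assms(2)]) (use ws ws_eq in auto)
    next
      case False
      then have "set (xs @ ys) \<subseteq> S" using ws ws_eq by auto
      then show ?thesis using assms(4)[of "length (xs @ ys)"] ws ws_eq
        by (simp add: vanishes_on_def)
    qed
    then show ?thesis
      using alternating_move_to_front[OF assms(1,2), of xs ys u] ws ws_eq by simp
  next
    case False
    then show ?thesis using assms(3) ws by (auto simp: vanishes_on_def)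
  qed
qed

lemma alternating_vanishes_on_insert2:
  assumes "multilinear k B" "alternating k B" "vanishes_on k B S"
    and "\<And>k1. k = Suc k1 \<Longrightarrow> vanishes_on k1 (\<lambda>zs. B (u # zs)) S"
    and "\<And>k1. k = Suc k1 \<Longrightarrow> vanishes_on k1 (\<lambda>zs. B (v # zs)) S"
    and "\<And>k2. k = Suc (Suc k2) \<Longrightarrow> vanishes_on k2 (\<lambda>zs. B (u # v # zs)) S"
  shows "vanishes_on k B (insert u (insert v S))"
proof (rule alternating_vanishes_on_insert[OF assms(1,2)])
  show "vanishes_on k B (insert v S)"
    by (rule alternating_vanishes_on_insert[OF assms(1-3,5)])
  show "vanishes_on k1 (\<lambda>zs. B (u # zs)) (insert v S)" if k: "k = Suc k1" for k1
  proof (rule alternating_vanishes_on_insert)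
    show "multilinear k1 (\<lambda>zs. B (u # zs))" "alternating k1 (\<lambda>zs. B (u # zs))"
      using multilinear_Cons[of k1 B u] alternating_Cons[of k1 B u] assms(1,2) k by simp_all
    show "vanishes_on k1 (\<lambda>zs. B (u # zs)) S"
      by (rule assms(4)[OF k])
    show "vanishes_on k2 (\<lambda>zs. B (u # v # zs)) S" if "k1 = Suc k2" for k2
      using assms(6) k that by simp
  qed
qed

(* Terms containing F twice vanish, so the expansion is affine in the coefficients of F. *)
lemma alternating_expand_repeated:
  assumes "multilinear (length ps) B" "alternating (length ps) B"
  shows "B (map (\<lambda>(w, c). w + c *\<^sub>R F) ps)
           = B (map fst ps) + (\<Sum>j<length ps. snd (ps!j) * B ((map fst ps)[j := F]))"
  using assms
proof (induction ps arbitrary: B)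
  case Nil
  then show ?case by simp
next
  case (Cons p ps)
  obtain w c where p: "p = (w, c)" by force
  let ?r = "map (\<lambda>(w, c). w + c *\<^sub>R F) ps" and ?ws = "map fst ps"
  have m: "multilinear (length ps) (\<lambda>zs. B (u # zs))" for u
    using multilinear_Cons Cons.prems(1) by simp
  have a: "alternating (length ps) (\<lambda>zs. B (u # zs))" for u
    using alternating_Cons Cons.prems(2) by simp
  have FF: "B (F # ?ws[j := F]) = 0" if "j < length ps" for j
    by (rule alternating_not_distinct[OF Cons.prems(2)])
      (use that in \<open>auto simp: set_update_memI\<close>)
  have "B (map (\<lambda>(w, c). w + c *\<^sub>R F) (p # ps)) = B (w # ?r) + c * B (F # ?r)"
    using multilinear_add[OF Cons.prems(1), of "[]" ?r] multilinear_scale[OF Cons.prems(1), of "[]" ?r]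
    by (simp add: p)
  also have "B (F # ?r) = B (F # ?ws)"
    using Cons.IH[OF m a] FF by simp
  also have "B (w # ?r) = B (w # ?ws) + (\<Sum>j<length ps. snd (ps!j) * B (w # ?ws[j := F]))"
    using Cons.IH[OF m a] by simp
  finally show ?case
    by (simp add: p sum.lessThan_Suc_shift del: sum.lessThan_Suc)
qed

lemma alternating_shift_by_null_vector:
  assumes "multilinear (length is) B" "alternating (length is) B"
    and "\<And>zs. length zs + 1 = length is \<Longrightarrow> B (u # zs) = 0"
  shows "B (map (\<lambda>i. g i + c i *\<^sub>R u) is) = B (map g is)"
proof -
  define ps where "ps = map (\<lambda>i. (g i, c i)) is"
  have "B ((map g is)[j := u]) = 0" if "j < length is" for j
  proof -
    have "(map g is)[j := u] = take j (map g is) @ u # drop (Suc j) (map g is)"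
      using that by (simp add: upd_conv_take_nth_drop)
    then show ?thesis
      using alternating_move_to_front[OF assms(1,2), of "take j (map g is)" "drop (Suc j) (map g is)" u]
        assms(3) that by simp
  qed
  then have "(\<Sum>j<length is. c (is!j) * B ((map g is)[j := u])) = 0"
    by (intro sum.neutral) simp
  then show ?thesis
    using alternating_expand_repeated[of ps B u] assms(1,2) by (simp add: ps_def comp_def)
qed

lemma alternating_swap_update:
  assumes "multilinear k B" "alternating k B" "length ws + 2 = k" "l < length ws" "ws!l = y"
  shows "B (x # y # ws[l := z]) = - B (x # z # ws)"
proof -
  define xs ys where "xs = take l ws" and "ys = drop (Suc l) ws"
  have ws: "ws = xs @ y # ys" "length xs = l"
    using assms(4,5) id_take_nth_drop[of l ws] by (simp_all add: xs_def ys_def)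
  then have "ws[l := z] = xs @ z # ys" by (metis list_update_length)
  then show ?thesis
    using alternating_swap[OF assms(1,2), of "[x]" xs ys y z] assms(3) ws by simp
qed

section \<open>Primitive forms vanishing on Lagrangian graphs\<close>

(* For symmetric H these vectors span the graph of H, a Lagrangian subspace for the symplectic
   form pairing e \<mu> with f \<mu>. *)
definition graph_vec ::
    "('i \<Rightarrow> 'v::real_vector) \<Rightarrow> ('i \<Rightarrow> 'v) \<Rightarrow> ('i \<Rightarrow> 'i \<Rightarrow> real) \<Rightarrow> 'i set \<Rightarrow> 'i \<Rightarrow> 'v" where
  "graph_vec e f H N i = e i + (\<Sum>j\<in>N. H i j *\<^sub>R f j)"

definition primitive ::
    "('i \<Rightarrow> 'v::real_vector) \<Rightarrow> ('i \<Rightarrow> 'v) \<Rightarrow> 'i set \<Rightarrow> nat \<Rightarrow> ('v list \<Rightarrow> real) \<Rightarrow> bool" where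
  "primitive e f N k B \<longleftrightarrow>
     (\<forall>vs. length vs + 2 = k \<longrightarrow> set vs \<subseteq> span (e ` N \<union> f ` N) \<longrightarrow>
        (\<Sum>\<mu>\<in>N. B (e \<mu> # f \<mu> # vs)) = 0)"

definition vanishes_on_graphs ::
    "('i \<Rightarrow> 'v::real_vector) \<Rightarrow> ('i \<Rightarrow> 'v) \<Rightarrow> 'i set \<Rightarrow> nat \<Rightarrow> ('v list \<Rightarrow> real) \<Rightarrow> bool" where
  "vanishes_on_graphs e f N k B \<longleftrightarrow>
     (\<forall>H is. (\<forall>i j. H i j = H j i) \<longrightarrow> length is = k \<longrightarrow> set is \<subseteq> N \<longrightarrow>
        B (map (graph_vec e f H N) is) = 0)"

definition bordered :: "('i \<Rightarrow> 'i \<Rightarrow> real) \<Rightarrow> 'i \<Rightarrow> ('i \<Rightarrow> real) \<Rightarrow> real \<Rightarrow> 'i \<Rightarrow> 'i \<Rightarrow> real" where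
  "bordered H a r c i j =
     (if i = a then (if j = a then c else r j) else if j = a then r i else H i j)"

lemma graph_vec_in_span: "i \<in> N \<Longrightarrow> graph_vec e f H N i \<in> span (e ` N \<union> f ` N)"
  unfolding graph_vec_def by (intro span_add span_sum span_scale) (auto intro: span_base)

lemma symmetric_bordered:
  "\<forall>i j. H i j = H j i \<Longrightarrow> \<forall>i j. bordered H a r c i j = bordered H a r c j i"
  by (simp add: bordered_def)

lemma graph_vec_bordered:
  assumes "finite N" "a \<notin> N" "i \<in> N"
  shows "graph_vec e f (bordered H a r c) (insert a N) i = graph_vec e f H N i + r i *\<^sub>R f a"
proof -
  have "(\<Sum>j\<in>N. bordered H a r c i j *\<^sub>R f j) = (\<Sum>j\<in>N. H i j *\<^sub>R f j)"
    using assms by (intro sum.cong) (auto simp: bordered_def)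
  with assms show ?thesis by (auto simp: graph_vec_def bordered_def algebra_simps)
qed

lemma graph_vec_bordered_corner:
  assumes "finite N" "a \<notin> N"
  shows "graph_vec e f (bordered H a r c) (insert a N) a = e a + c *\<^sub>R f a + (\<Sum>j\<in>N. r j *\<^sub>R f j)"
proof -
  have "(\<Sum>j\<in>N. bordered H a r c a j *\<^sub>R f j) = (\<Sum>j\<in>N. r j *\<^sub>R f j)"
    using assms by (intro sum.cong) (auto simp: bordered_def)
  with assms show ?thesis by (simp add: graph_vec_def bordered_def add.assoc)
qed

lemma vanishes_on_graphsD:
  "vanishes_on_graphs e f N k B \<Longrightarrow> \<forall>i j. H i j = H j i \<Longrightarrow> length is = k \<Longrightarrow> set is \<subseteq> N
    \<Longrightarrow> B (map (graph_vec e f H N) is) = 0"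
  by (simp add: vanishes_on_graphs_def)

lemma map_graph_vec_bordered:
  assumes "finite N" "a \<notin> N" "set is \<subseteq> N"
  shows "map (graph_vec e f (bordered H a r c) (insert a N)) is
       = map (\<lambda>i. graph_vec e f H N i + r i *\<^sub>R f a) is"
  using assms by (auto intro!: map_cong graph_vec_bordered)

lemma vanishes_on_graphs_subset:
  fixes e f :: "'i \<Rightarrow> 'v::real_vector"
  assumes "finite N" "a \<notin> N" "vanishes_on_graphs e f (insert a N) k B"
  shows "vanishes_on_graphs e f N k B"
  unfolding vanishes_on_graphs_def
proof (intro allI impI)
  fix H :: "'i \<Rightarrow> 'i \<Rightarrow> real" and "is"
  assume H: "\<forall>i j. H i j = H j i" and "is": "length is = k" "set is \<subseteq> N"
  let ?H = "bordered H a (\<lambda>_. 0) 0"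
  have "map (graph_vec e f ?H (insert a N)) is = map (graph_vec e f H N) is"
    using map_graph_vec_bordered[OF assms(1,2) "is"(2), of e f H "\<lambda>_. 0" 0] by simp
  moreover have "B (map (graph_vec e f ?H (insert a N)) is) = 0"
    by (rule vanishes_on_graphsD[OF assms(3) symmetric_bordered[OF H]]) (use "is" in auto)
  ultimately show "B (map (graph_vec e f H N) is) = 0" by metis
qed

lemma vanishes_on_graphs_Cons:
  fixes e f :: "'i \<Rightarrow> 'v::real_vector"
  assumes "finite N" "a \<notin> N" "multilinear (Suc k) B"
    and "vanishes_on_graphs e f (insert a N) (Suc k) B"
  shows "vanishes_on_graphs e f N k (\<lambda>zs. B (e a # zs))"
    and "vanishes_on_graphs e f N k (\<lambda>zs. B (f a # zs))"
proof -
  have key: "B (e a # map (graph_vec e f H N) is) + c * B (f a # map (graph_vec e f H N) is) = 0"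
    if H: "\<forall>i j. H i j = H j i" and "is": "length is = k" "set is \<subseteq> N" for H "is" c
  proof -
    let ?H = "bordered H a (\<lambda>_. 0) c"
    have "graph_vec e f ?H (insert a N) a = e a + c *\<^sub>R f a"
      using graph_vec_bordered_corner[OF assms(1,2), of e f H "\<lambda>_. 0" c] by simp
    then have "map (graph_vec e f ?H (insert a N)) (a # is)
        = (e a + c *\<^sub>R f a) # map (graph_vec e f H N) is"
      using map_graph_vec_bordered[OF assms(1,2) "is"(2), of e f H "\<lambda>_. 0" c] by simp
    moreover have "B (map (graph_vec e f ?H (insert a N)) (a # is)) = 0"
      by (rule vanishes_on_graphsD[OF assms(4) symmetric_bordered[OF H]]) (use "is" in auto)
    ultimately have "B ((e a + c *\<^sub>R f a) # map (graph_vec e f H N) is) = 0"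
      by metis
    then show ?thesis
      using multilinear_add[OF assms(3), of "[]"] multilinear_scale[OF assms(3), of "[]"] "is"
      by simp
  qed
  show "vanishes_on_graphs e f N k (\<lambda>zs. B (e a # zs))"
    unfolding vanishes_on_graphs_def using key[where c = 0] by simp
  show "vanishes_on_graphs e f N k (\<lambda>zs. B (f a # zs))"
    unfolding vanishes_on_graphs_def using key[where c = 0] key[where c = 1] by force
qed

lemma primitive_prefix:
  assumes "finite N" "a \<notin> N" "multilinear k B" "alternating k B"
    and "primitive e f (insert a N) k B"
    and "k = length us + k1" "us \<noteq> []" "set us \<subseteq> {e a, f a}"
  shows "primitive e f N k1 (\<lambda>zs. B (us @ zs))"
  unfolding primitive_def
proof (intro allI impI)
  fix vs
  assume vs: "length vs + 2 = k1" "set vs \<subseteq> span (e ` N \<union> f ` N)"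
  have "span (e ` N \<union> f ` N) \<subseteq> span (e ` insert a N \<union> f ` insert a N)"
    by (rule span_mono) auto
  then have "set (us @ vs) \<subseteq> span (e ` insert a N \<union> f ` insert a N)"
    using assms(8) vs by (auto intro: span_base)
  then have "(\<Sum>\<mu>\<in>insert a N. B (e \<mu> # f \<mu> # us @ vs)) = 0"
    using assms(5,6) vs unfolding primitive_def by simp
  moreover have "B (e a # f a # us @ vs) = 0"
    using assms(6-8) vs
    by (intro alternating_not_distinct[OF assms(4)]) (auto simp: neq_Nil_conv)
  moreover have "B (us @ e \<mu> # f \<mu> # vs) = B (e \<mu> # f \<mu> # us @ vs)" for \<mu>
    by (rule alternating_move_pair_to_front[OF assms(3,4)]) (use assms(6) vs in simp)
  ultimately show "(\<Sum>\<mu>\<in>N. B (us @ e \<mu> # f \<mu> # vs)) = 0"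
    using assms(1,2) by simp
qed

lemma primitive_remove:
  assumes "finite N" "a \<notin> N" "primitive e f (insert a N) k B"
    and "\<And>k2. k = Suc (Suc k2) \<Longrightarrow> vanishes_on k2 (\<lambda>zs. B (e a # f a # zs)) (span (e ` N \<union> f ` N))"
  shows "primitive e f N k B"
  unfolding primitive_def
proof (intro allI impI)
  fix vs
  assume vs: "length vs + 2 = k" "set vs \<subseteq> span (e ` N \<union> f ` N)"
  have "span (e ` N \<union> f ` N) \<subseteq> span (e ` insert a N \<union> f ` insert a N)"
    by (rule span_mono) auto
  then have "(\<Sum>\<mu>\<in>insert a N. B (e \<mu> # f \<mu> # vs)) = 0"
    using assms(3) vs unfolding primitive_def by auto
  moreover have "B (e a # f a # vs) = 0"
    using assms(4)[of "length vs"] vs by (simp add: vanishes_on_def)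
  ultimately show "(\<Sum>\<mu>\<in>N. B (e \<mu> # f \<mu> # vs)) = 0"
    using assms(1,2) by simp
qed

lemma graph_trace:
  assumes "finite N" "multilinear k B" "alternating k B" "\<forall>i j. H i j = H j i"
    and "length vs + 2 = k"
  shows "(\<Sum>\<mu>\<in>N. B (f \<mu> # graph_vec e f H N \<mu> # vs)) = - (\<Sum>\<mu>\<in>N. B (e \<mu> # f \<mu> # vs))"
proof -
  have swap: "B (x # y # vs) = - B (y # x # vs)" for x y
    using alternating_swap[OF assms(2,3), of "[]" "[]" vs x y] assms(5) by simp
  have lin: "linear (\<lambda>v. B (v # f \<mu> # vs))" for \<mu>
    using multilinear_linear_slot[OF assms(2), of "[]"] assms(5) by simp
  have expand: "B (graph_vec e f H N \<mu> # f \<mu> # vs)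
      = B (e \<mu> # f \<mu> # vs) + (\<Sum>j\<in>N. H \<mu> j * B (f j # f \<mu> # vs))" for \<mu>
    by (simp add: graph_vec_def linear_add[OF lin] linear_sum[OF lin] linear_scale[OF lin])
  let ?S = "\<Sum>\<mu>\<in>N. \<Sum>j\<in>N. H \<mu> j * B (f j # f \<mu> # vs)"
  have "?S = (\<Sum>j\<in>N. \<Sum>\<mu>\<in>N. H \<mu> j * B (f j # f \<mu> # vs))"
    by (rule sum.swap)
  also have "\<dots> = (\<Sum>j\<in>N. \<Sum>\<mu>\<in>N. - (H j \<mu> * B (f \<mu> # f j # vs)))"
    using assms(4) swap by (intro sum.cong refl) (metis mult_minus_right)
  finally have "?S = 0" by (simp add: sum_negf)
  have "(\<Sum>\<mu>\<in>N. B (f \<mu> # graph_vec e f H N \<mu> # vs))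
      = (\<Sum>\<mu>\<in>N. - B (graph_vec e f H N \<mu> # f \<mu> # vs))"
    by (intro sum.cong refl) (rule swap)
  with \<open>?S = 0\<close> show ?thesis
    by (simp add: expand sum.distrib sum_negf sum_subtractf)
qed

lemma of_nat_count_list_eq_sum:
  "of_nat (count_list xs y) = (\<Sum>l<length xs. if xs!l = y then 1 else 0 :: 'a::semiring_1)"
  by (induction xs) (auto simp: sum.lessThan_Suc_shift simp del: sum.lessThan_Suc)

lemma bordered_graph_expansion:
  fixes e f :: "'i \<Rightarrow> 'v::real_vector"
  assumes "finite N" "a \<notin> N" "multilinear k B" "alternating k B"
    and "vanishes_on_graphs e f (insert a N) k B" "k = Suc (Suc k2)"
    and H: "\<forall>i j. H i j = H j i" and "is": "length is = k2" "set is \<subseteq> N" and \<mu>: "\<mu> \<in> N"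
  defines "g \<equiv> graph_vec e f H N" and "gs \<equiv> map (graph_vec e f H N) is"
  shows "B ((e a + f \<mu>) # g \<mu> # gs) + B ((e a + f \<mu>) # f a # gs)
       + (\<Sum>l<k2. if is!l = \<mu> then B ((e a + f \<mu>) # g \<mu> # gs[l := f a]) else 0) = 0"
proof -
  \<comment> \<open>The graph of the bordered matrix contains \<open>e a + f \<mu>\<close> and the \<open>g i + \<delta>\<^sub>i\<^sub>\<mu> f a\<close>.\<close>
  let ?H = "bordered H a (\<lambda>j. if j = \<mu> then 1 else 0) 0"
  define ps where "ps = (e a + f \<mu>, 0::real) # (g \<mu>, 1) # map (\<lambda>i. (g i, if i = \<mu> then 1 else 0)) is"
  have "(\<Sum>j\<in>N. (if j = \<mu> then 1 else 0) *\<^sub>R f j) = (\<Sum>j\<in>N. if j = \<mu> then f j else 0)"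
    by (rule sum.cong) auto
  then have "graph_vec e f ?H (insert a N) a = e a + f \<mu>"
    using graph_vec_bordered_corner[OF assms(1,2), of e f H "\<lambda>j. if j = \<mu> then 1 else 0" 0]
      assms(1) \<mu> by simp
  then have "map (graph_vec e f ?H (insert a N)) (a # \<mu> # is) = map (\<lambda>(w, c). w + c *\<^sub>R f a) ps"
    using map_graph_vec_bordered[OF assms(1,2), of "\<mu> # is" e f H "\<lambda>j. if j = \<mu> then 1 else 0" 0]
      "is" \<mu> by (simp add: ps_def g_def)
  moreover have "B (map (graph_vec e f ?H (insert a N)) (a # \<mu> # is)) = 0"
    by (rule vanishes_on_graphsD[OF assms(5) symmetric_bordered[OF H]])
      (use "is" \<mu> assms(6) in auto)
  moreover have "length ps = k" using "is" assms(6) by (simp add: ps_def)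
  ultimately have "B (map fst ps) + (\<Sum>j<Suc (Suc k2). snd (ps!j) * B ((map fst ps)[j := f a])) = 0"
    using alternating_expand_repeated[of ps B "f a"] assms(3,4,6) by simp
  moreover have "map fst ps = (e a + f \<mu>) # g \<mu> # gs"
    by (simp add: ps_def comp_def g_def gs_def)
  moreover have "snd (ps!Suc (Suc l)) = (if is!l = \<mu> then 1 else 0)" if "l < k2" for l
    using that "is" by (simp add: ps_def)
  ultimately have "B ((e a + f \<mu>) # g \<mu> # gs) + B ((e a + f \<mu>) # f a # gs)
      + (\<Sum>l<k2. (if is!l = \<mu> then 1 else 0) * B ((e a + f \<mu>) # g \<mu> # gs[l := f a])) = 0"
    by (simp add: sum.lessThan_Suc_shift ps_def add.assoc del: sum.lessThan_Suc)
  moreover have "(\<Sum>l<k2. (if is!l = \<mu> then 1 else 0) * B ((e a + f \<mu>) # g \<mu> # gs[l := f a]))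
      = (\<Sum>l<k2. if is!l = \<mu> then B ((e a + f \<mu>) # g \<mu> # gs[l := f a]) else 0)"
    by (rule sum.cong) simp_all
  ultimately show ?thesis by simp
qed

lemma graph_pair_identity:
  fixes e f :: "'i \<Rightarrow> 'v::real_vector"
  assumes "finite N" "a \<notin> N" "multilinear k B" "alternating k B"
    and "vanishes_on_graphs e f (insert a N) k B" "k = Suc (Suc k2)"
    and V10: "vanishes_on (Suc k2) (\<lambda>zs. B (e a # zs)) (span (e ` N \<union> f ` N))"
    and V01: "vanishes_on (Suc k2) (\<lambda>zs. B (f a # zs)) (span (e ` N \<union> f ` N))"
    and H: "\<forall>i j. H i j = H j i" and "is": "length is = k2" "set is \<subseteq> N" and \<mu>: "\<mu> \<in> N"
  defines "gs \<equiv> map (graph_vec e f H N) is"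
  shows "B (f \<mu> # graph_vec e f H N \<mu> # gs) + B (e a # f a # gs)
       = real (count_list is \<mu>) * B (e a # f a # gs)"
proof -
  define g where "g = graph_vec e f H N"
  define X where "X = B (e a # f a # gs)"
  let ?SN = "span (e ` N \<union> f ` N)"
  have g_SN: "g i \<in> ?SN" if "i \<in> N" for i
    using graph_vec_in_span[OF that] by (simp add: g_def)
  have gs: "length gs = k2" "set gs \<subseteq> ?SN"
    using "is" g_SN by (auto simp: gs_def g_def)
  have f\<mu>: "f \<mu> \<in> ?SN" using \<mu> by (simp add: span_base)
  have split: "B ((e a + f \<mu>) # ys) = B (e a # ys) + B (f \<mu> # ys)" if "length ys = Suc k2" for ys
    using multilinear_add[OF assms(3), of "[]" ys] that assms(6) by simp
  have swap: "B (x # y # ys) = - B (y # x # ys)" if "length ys = k2" for x y ys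
    using alternating_swap[OF assms(3,4), of "[]" "[]" ys x y] that assms(6) by simp
  have F_second: "B (x # f a # gs) = 0" if "x \<in> ?SN" for x
    using swap[OF gs(1), of x "f a"] V01 that gs by (simp add: vanishes_on_def)
  have "B (e a # g \<mu> # gs) = 0"
    using V10 gs g_SN \<mu> by (simp add: vanishes_on_def)
  then have T1: "B ((e a + f \<mu>) # g \<mu> # gs) = B (f \<mu> # g \<mu> # gs)"
    using split gs by simp
  have T2: "B ((e a + f \<mu>) # f a # gs) = X"
    using split gs F_second[OF f\<mu>] by (simp add: X_def)
  have T3: "B ((e a + f \<mu>) # g \<mu> # gs[l := f a]) = - X" if "l < k2" "is!l = \<mu>" for l
  proof -
    have "gs!l = g \<mu>" using that gs "is" by (simp add: gs_def g_def)
    then have "B (x # g \<mu> # gs[l := f a]) = - B (x # f a # gs)" for x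
      by (intro alternating_swap_update[OF assms(3,4)]) (use that gs assms(6) in simp_all)
    then show ?thesis using split gs F_second[OF f\<mu>] by (simp add: X_def)
  qed
  have "B (f \<mu> # g \<mu> # gs) + X + (\<Sum>l<k2. if is!l = \<mu> then - X else 0) = 0"
    using bordered_graph_expansion[OF assms(1-6) H "is" \<mu>] T1 T2 T3
    by (simp add: g_def gs_def cong: if_cong)
  moreover have "(\<Sum>l<k2. if is!l = \<mu> then - X else 0) = - real (count_list is \<mu>) * X"
    unfolding of_nat_count_list_eq_sum sum_negf[symmetric] sum_distrib_right
    using "is" by (auto intro!: sum.cong)
  ultimately show ?thesis by (simp add: g_def X_def)
qed

lemma vanishes_on_graphs_pair_prefix:
  fixes e f :: "'i \<Rightarrow> 'v::real_vector"
  assumes "finite N" "a \<notin> N" "multilinear k B" "alternating k B"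
    and "primitive e f (insert a N) k B" "vanishes_on_graphs e f (insert a N) k B"
    and "k = Suc (Suc k2)"
    and "vanishes_on (Suc k2) (\<lambda>zs. B (e a # zs)) (span (e ` N \<union> f ` N))"
    and "vanishes_on (Suc k2) (\<lambda>zs. B (f a # zs)) (span (e ` N \<union> f ` N))"
  shows "vanishes_on_graphs e f N k2 (\<lambda>zs. B (e a # f a # zs))"
  unfolding vanishes_on_graphs_def
proof (intro allI impI)
  fix H :: "'i \<Rightarrow> 'i \<Rightarrow> real" and "is"
  assume H: "\<forall>i j. H i j = H j i" and "is": "length is = k2" "set is \<subseteq> N"
  define gs where "gs = map (graph_vec e f H N) is"
  define X where "X = B (e a # f a # gs)"
  show "B (e a # f a # map (graph_vec e f H N) is) = 0"
  proof (cases "distinct is")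
    case False
    then have "\<not> distinct (e a # f a # map (graph_vec e f H N) is)"
      by (auto simp: distinct_map)
    then show ?thesis
      using alternating_not_distinct[OF assms(4)] "is" assms(7) by simp
  next
    case True
    then have "k2 \<le> card N"
      using "is" assms(1) by (metis card_mono distinct_card)
    have gs_SN: "set gs \<subseteq> span (e ` N \<union> f ` N)"
      using "is" by (auto simp: gs_def intro!: graph_vec_in_span)
    have "span (e ` N \<union> f ` N) \<subseteq> span (e ` insert a N \<union> f ` insert a N)"
      by (rule span_mono) auto
    then have "(\<Sum>\<mu>\<in>insert a N. B (e \<mu> # f \<mu> # gs)) = 0"
      using assms(5,7) "is" gs_SN unfolding primitive_def by (auto simp: gs_def)
    then have "(\<Sum>\<mu>\<in>N. B (f \<mu> # graph_vec e f H N \<mu> # gs)) = X"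
      using graph_trace[OF assms(1,3,4) H, of gs] assms(1,2,7) "is"
      by (simp add: X_def gs_def)
    moreover have "(\<Sum>\<mu>\<in>N. B (f \<mu> # graph_vec e f H N \<mu> # gs) + X) = real k2 * X"
    proof -
      have "(\<Sum>\<mu>\<in>N. B (f \<mu> # graph_vec e f H N \<mu> # gs) + X)
          = (\<Sum>\<mu>\<in>N. real (count_list is \<mu>) * X)"
        using graph_pair_identity[OF assms(1-4,6,7,8,9) H "is"] by (simp add: X_def gs_def)
      also have "\<dots> = real k2 * X"
        using sum_count_set[OF "is"(2) assms(1)] "is"(1)
        by (simp flip: sum_distrib_right of_nat_sum)
      finally show ?thesis .
    qed
    ultimately have "(real (card N) + 1 - real k2) * X = 0"
      by (simp add: sum.distrib algebra_simps)
    with \<open>k2 \<le> card N\<close> show ?thesis by (simp add: X_def gs_def)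
  qed
qed

theorem vanishes_on_span_if_primitive_and_vanishes_on_graphs:
  fixes e f :: "'i \<Rightarrow> 'v::real_vector"
  assumes "finite N" "multilinear k B" "alternating k B"
    and "primitive e f N k B" "vanishes_on_graphs e f N k B"
  shows "vanishes_on k B (span (e ` N \<union> f ` N))"
  using assms
proof (induction N arbitrary: k B rule: finite_induct)
  case empty
  have "B [] = 0" if "k = 0"
    using vanishes_on_graphsD[OF empty.prems(4), of "\<lambda>_ _. 0" "[]"] that by simp
  then have "vanishes_on k B {}" by (auto simp: vanishes_on_def)
  then show ?case by (intro multilinear_vanishes_on_span[OF empty.prems(1)]) simp
next
  case (insert a N)
  let ?SN = "span (e ` N \<union> f ` N)"
  note IH = insert.IH
  note m = insert.prems(1) and al = insert.prems(2) and P = insert.prems(3) and G = insert.prems(4)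
  have V10: "vanishes_on k1 (\<lambda>zs. B (e a # zs)) ?SN"
    and V01: "vanishes_on k1 (\<lambda>zs. B (f a # zs)) ?SN" if k: "k = Suc k1" for k1
  proof -
    have m1: "multilinear k1 (\<lambda>zs. B (u # zs))" and a1: "alternating k1 (\<lambda>zs. B (u # zs))" for u
      using multilinear_Cons[of k1 B u] alternating_Cons[of k1 B u] m al k by auto
    have "primitive e f N k1 (\<lambda>zs. B ([u] @ zs))" if "u \<in> {e a, f a}" for u
      by (rule primitive_prefix[OF insert.hyps(1,2) m al P]) (use k that in auto)
    then show "vanishes_on k1 (\<lambda>zs. B (e a # zs)) ?SN" "vanishes_on k1 (\<lambda>zs. B (f a # zs)) ?SN"
      using IH[OF m1 a1] vanishes_on_graphs_Cons[OF insert.hyps(1,2), of k1 B e f] m G k by auto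
  qed
  have V11: "vanishes_on k2 (\<lambda>zs. B (e a # f a # zs)) ?SN" if k: "k = Suc (Suc k2)" for k2
  proof (rule IH)
    show "multilinear k2 (\<lambda>zs. B (e a # f a # zs))"
      using multilinear_Cons[OF multilinear_Cons[of "Suc k2" B "e a"]] m k by simp
    show "alternating k2 (\<lambda>zs. B (e a # f a # zs))"
      using alternating_Cons[OF alternating_Cons[of "Suc k2" B "e a"]] al k by simp
    show "primitive e f N k2 (\<lambda>zs. B (e a # f a # zs))"
      using primitive_prefix[OF insert.hyps(1,2) m al P, of "[e a, f a]" k2] k by simp
    show "vanishes_on_graphs e f N k2 (\<lambda>zs. B (e a # f a # zs))"
      by (rule vanishes_on_graphs_pair_prefix[OF insert.hyps(1,2) m al P G k V10 V01]) (use k in simp_all)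
  qed
  have V00: "vanishes_on k B ?SN"
    using IH[OF m al primitive_remove[OF insert.hyps(1,2) P V11]
        vanishes_on_graphs_subset[OF insert.hyps(1,2) G]] .
  have "vanishes_on k B (insert (e a) (insert (f a) ?SN))"
    by (rule alternating_vanishes_on_insert2[OF m al V00 V10 V01 V11])
  then have "vanishes_on k B (e ` insert a N \<union> f ` insert a N)"
    by (rule vanishes_on_subset) (auto intro: span_base)
  then show ?case by (rule multilinear_vanishes_on_span[OF m])
qed

section \<open>Quadratic functions and their 1-jets\<close>

definition quadratic :: "real \<Rightarrow> real^'n \<Rightarrow> real^'n^'n \<Rightarrow> real^'n \<Rightarrow> real^'n \<Rightarrow> real" where
  "quadratic c l M z x = c + l \<bullet> (x - z) + (x - z) \<bullet> (M *v (x - z))"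

lemma has_derivative_quadratic:
  "(quadratic c l M z has_derivative (\<lambda>h. l \<bullet> h + h \<bullet> (M *v (x - z)) + (x - z) \<bullet> (M *v h))) (at x)"
  unfolding quadratic_def[abs_def]
  by (auto intro!: derivative_eq_intros
      bounded_linear.has_derivative[OF matrix_vector_mul_bounded_linear] simp: algebra_simps)

lemma directional_derivative_quadratic:
  "frechet_derivative (quadratic c l M z) (at x) h = quadratic (l \<bullet> h) (h v* M + M *v h) 0 z x"
proof -
  have "h \<bullet> (M *v (x - z)) = (h v* M) \<bullet> (x - z)" by (simp add: dot_lmul_matrix)
  moreover have "(x - z) \<bullet> (M *v h) = (M *v h) \<bullet> (x - z)" by (rule inner_commute)
  ultimately show ?thesis
    unfolding frechet_derivative_at[OF has_derivative_quadratic, symmetric]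
    by (simp add: quadratic_def inner_add_left)
qed

lemma Ck_on_quadratic: "Ck_on k U (quadratic c l M z)"
proof (induction k arbitrary: c l M)
  case 0
  show ?case
    by (auto intro!: continuous_at_imp_continuous_on has_derivative_continuous[OF has_derivative_quadratic])
next
  case (Suc k)
  show ?case
    by (auto simp: directional_derivative_quadratic Suc.IH
        intro!: differentiable_at_imp_differentiable_on differentiableI[OF has_derivative_quadratic])
qed

lemma Cinf_on_quadratic: "Cinf_on U (quadratic c l M z)"
  by (simp add: Cinf_on_def Ck_on_quadratic)

lemma j1_quadratic:
  fixes S :: "real^'n::finite^'n"
  assumes "transpose S = S"
  shows "j1 (quadratic u l ((1/2) *\<^sub>R S) z) = (\<lambda>q. (q, quadratic u l ((1/2) *\<^sub>R S) z q, l + S *v (q - z)))"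
proof -
  have column: "(q - z) \<bullet> (S *v axis \<mu> 1) = (S *v (q - z)) $ \<mu>" for q \<mu>
  proof -
    have "(q - z) \<bullet> (S *v axis \<mu> 1) = ((q - z) v* S) \<bullet> axis \<mu> 1"
      by (simp add: dot_lmul_matrix)
    also have "\<dots> = (transpose S *v (q - z)) $ \<mu>"
      by (simp add: inner_axis)
    finally show ?thesis using assms by simp
  qed
  have "frechet_derivative (quadratic u l ((1/2) *\<^sub>R S) z) (at q) (axis \<mu> 1) = (l + S *v (q - z)) $ \<mu>"
    for q \<mu>
    unfolding frechet_derivative_at[OF has_derivative_quadratic, symmetric]
    by (simp add: inner_axis inner_axis' column flip: scaleR_matrix_vector_assoc)
  then show ?thesis by (auto simp: j1_def fun_eq_iff vec_eq_iff)
qed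

lemma tangent_j1_quadratic:
  fixes S :: "real^'n::finite^'n"
  assumes "transpose S = S"
  shows "j1 (quadratic u l ((1/2) *\<^sub>R S) z) z = (z, u, l)"
    and "frechet_derivative (j1 (quadratic u l ((1/2) *\<^sub>R S) z)) (at z) h = (h, l \<bullet> h, S *v h)"
proof -
  show "j1 (quadratic u l ((1/2) *\<^sub>R S) z) z = (z, u, l)"
    by (simp add: j1_quadratic[OF assms] quadratic_def)
  have "((\<lambda>q. (q, quadratic u l ((1/2) *\<^sub>R S) z q, l + S *v (q - z))) has_derivative
      (\<lambda>h. (h, l \<bullet> h, S *v h))) (at z)"
    using has_derivative_quadratic[of u l "(1/2) *\<^sub>R S" z z]
    by (auto intro!: derivative_eq_intros
        bounded_linear.has_derivative[OF matrix_vector_mul_bounded_linear])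
  then show "frechet_derivative (j1 (quadratic u l ((1/2) *\<^sub>R S) z)) (at z) h = (h, l \<bullet> h, S *v h)"
    unfolding j1_quadratic[OF assms] by (simp add: frechet_derivative_at[symmetric])
qed

lemma sum_scaleR_axis: "(\<Sum>j\<in>UNIV. c j *\<^sub>R axis j 1) = (\<chi> j. c j :: real^'n::finite)"
  using basis_expansion[of "\<chi> j. c j"] by (simp add: scalar_mult_eq_scaleR)

lemma graph_vec_dq_dp: "graph_vec dq_vec dp_vec H UNIV i = (axis i 1, 0, \<chi> j. H i j :: real^'n::finite)"
  by (simp add: graph_vec_def dq_vec_def dp_vec_def prod_eq_iff fst_sum snd_sum sum_scaleR_axis)

lemma tangent_j1_quadratic_axis:
  fixes H :: "'n::finite \<Rightarrow> 'n \<Rightarrow> real"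
  assumes "\<forall>i j. H i j = H j i"
  shows "frechet_derivative (j1 (quadratic u l ((1/2) *\<^sub>R (\<chi> i j. H i j)) z)) (at z) (axis i 1)
       = graph_vec dq_vec dp_vec H UNIV i + l $ i *\<^sub>R reeb"
proof -
  have "transpose (\<chi> i j. H i j) = (\<chi> i j. H i j)"
    using assms by (simp add: transpose_def)
  moreover have "(\<chi> i j. H i j) *v axis i 1 = (\<chi> j. H i j)"
    using assms by (simp add: matrix_vector_mult_basis column_def)
  ultimately show ?thesis
    by (simp add: tangent_j1_quadratic graph_vec_dq_dp inner_axis reeb_def)
qed

lemma span_jet_frame: "span (insert reeb (range dq_vec \<union> range dp_vec)) = (UNIV :: 'n::finite jet set)"
proof -
  have "v \<in> span (insert reeb (range dq_vec \<union> range dp_vec))" for v :: "'n jet"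
  proof -
    have "(\<Sum>j\<in>UNIV. fst v $ j *\<^sub>R dq_vec j) + fst (snd v) *\<^sub>R reeb + (\<Sum>j\<in>UNIV. snd (snd v) $ j *\<^sub>R dp_vec j)
        \<in> span (insert reeb (range dq_vec \<union> range dp_vec))"
      by (intro span_add span_sum span_scale) (auto intro: span_base)
    moreover have "(\<Sum>j\<in>UNIV. fst v $ j *\<^sub>R dq_vec j) + fst (snd v) *\<^sub>R reeb
        + (\<Sum>j\<in>UNIV. snd (snd v) $ j *\<^sub>R dp_vec j) = v"
      by (simp add: dq_vec_def dp_vec_def reeb_def prod_eq_iff fst_sum snd_sum sum_scaleR_axis)
    ultimately show ?thesis by simp
  qed
  then show ?thesis by auto
qed

section \<open>The coordinate volume form\<close>

definition qindex :: "'n::finite \<Rightarrow> nat" where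
  "qindex = inv_into {..<CARD('n)} qenum"

lemma bij_betw_qenum: "bij_betw (qenum :: nat \<Rightarrow> 'n::finite) {..<CARD('n)} UNIV"
proof -
  have "\<exists>e :: nat \<Rightarrow> 'n. bij_betw e {..<CARD('n)} UNIV"
    using ex_bij_betw_nat_finite[of "UNIV :: 'n set"] by (auto simp: atLeast0LessThan)
  then show ?thesis unfolding qenum_def by (rule someI_ex)
qed

lemma qindex_less: "qindex (b :: 'n::finite) < CARD('n)"
  using bij_betw_inv_into[OF bij_betw_qenum] unfolding qindex_def by (auto dest: bij_betwE)

lemma qenum_qindex [simp]: "qenum (qindex b) = (b :: 'n::finite)"
  unfolding qindex_def by (rule bij_betw_inv_into_right[OF bij_betw_qenum]) simp

lemma qindex_qenum [simp]: "i < CARD('n::finite) \<Longrightarrow> qindex (qenum i :: 'n) = i"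
  unfolding qindex_def by (rule bij_betw_inv_into_left[OF bij_betw_qenum]) simp

lemma dq_vol_eq_det_rows: "dq_vol vs = det (\<chi> b. fst (vs ! qindex b) :: real^'n::finite^'n)"
proof -
  have "(\<chi> a b. fst (vs ! qindex b) $ a) = transpose (\<chi> b. fst (vs ! qindex b) :: real^'n^'n)"
    by (simp add: transpose_def vec_eq_iff)
  then show ?thesis by (simp add: dq_vol_def[folded qindex_def])
qed

lemma dq_vol_cong:
  assumes "length vs = CARD('n::finite)" "map fst vs = map fst (ws :: 'n jet list)"
  shows "dq_vol vs = dq_vol ws"
proof -
  have "fst (vs ! qindex b) = fst (ws ! qindex b)" for b :: 'n
    using assms qindex_less[of b] by (metis length_map nth_map)
  then show ?thesis by (simp add: dq_vol_eq_det_rows)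
qed

lemma dq_vol_eq_0:
  assumes "length vs = CARD('n::finite)" "i < CARD('n)" "fst (vs ! i) = (0 :: real^'n)"
  shows "dq_vol vs = 0"
proof -
  have "row (qenum i) (\<chi> b. fst (vs ! qindex b) :: real^'n^'n) = 0"
    using assms by (simp add: row_def vec_eq_iff)
  then show ?thesis by (metis dq_vol_eq_det_rows det_zero_row(1))
qed

lemma multilinear_dq_vol: "multilinear CARD('n::finite) (dq_vol :: 'n jet list \<Rightarrow> real)"
  unfolding multilinear_def
proof (intro allI impI)
  fix vs :: "'n jet list" and i
  assume "length vs = CARD('n)" "i < CARD('n)"
  then have upd: "dq_vol (vs[i := v]) = det (\<chi> b. if b = qenum i then fst v else fst (vs ! qindex b))"
    for v
    unfolding dq_vol_eq_det_rows
    by (metis (opaque_lifting) qenum_qindex qindex_less qindex_qenum nth_list_update)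
  show "linear (\<lambda>v. dq_vol (vs[i := v]))"
  proof (rule linearI)
    fix v w :: "'n jet"
    show "dq_vol (vs[i := v + w]) = dq_vol (vs[i := v]) + dq_vol (vs[i := w])"
      unfolding upd fst_add by (rule det_row_add)
  next
    fix r :: real and v :: "'n jet"
    show "dq_vol (vs[i := r *\<^sub>R v]) = r *\<^sub>R dq_vol (vs[i := v])"
      unfolding upd fst_scaleR scalar_mult_eq_scaleR[symmetric]
      using det_row_mul[of "qenum i" r "\<lambda>_. fst v" "\<lambda>b. fst (vs ! qindex b)"] by simp
  qed
qed

lemma alternating_dq_vol: "alternating CARD('n::finite) (dq_vol :: 'n jet list \<Rightarrow> real)"
  unfolding alternating_def
proof (intro allI impI)
  fix vs :: "'n jet list" and i j
  assume "length vs = CARD('n)" "i < CARD('n)" "j < CARD('n)" "i \<noteq> j" "vs!i = vs!j"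
  moreover have "qenum i \<noteq> (qenum j :: 'n)"
    using calculation by (metis qindex_qenum)
  ultimately show "dq_vol vs = 0"
    unfolding dq_vol_eq_det_rows by (intro det_identical_rows[of "qenum i" "qenum j"]) (auto simp: row_def)
qed

definition dq_frame :: "'n::finite jet list" where
  "dq_frame = map dq_vec (map qenum [0..<CARD('n)])"

lemma dq_vol_dq_frame: "dq_vol (dq_frame :: 'n::finite jet list) = 1"
proof -
  have "fst ((dq_frame :: 'n jet list) ! qindex b) = axis b 1" for b :: 'n
    using qindex_less[of b] by (simp add: dq_frame_def dq_vec_def)
  then have "(\<chi> b. fst ((dq_frame :: 'n jet list) ! qindex b)) = (mat 1 :: real^'n^'n)"
    by (simp add: mat_def axis_def vec_eq_iff)
  then show ?thesis by (simp add: dq_vol_eq_det_rows)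
qed

lemma alternating_dq_vec_eq_0:
  fixes B :: "'n::finite jet list \<Rightarrow> real"
  assumes "multilinear CARD('n) B" "alternating CARD('n) B" "B dq_frame = 0"
    and "length is = CARD('n)"
  shows "B (map dq_vec is) = 0"
proof (cases "distinct is")
  case False
  have "inj (dq_vec :: 'n \<Rightarrow> 'n jet)"
    by (rule injI) (simp add: dq_vec_def axis_eq_axis)
  with False show ?thesis
    using alternating_not_distinct[OF assms(2)] assms(4) by (simp add: distinct_map inj_on_subset)
next
  case True
  define T where "T = map (qenum :: nat \<Rightarrow> 'n) [0..<CARD('n)]"
  have set_is: "set is = UNIV"
    using True assms(4) by (metis card_eq_UNIV_imp_eq_UNIV distinct_card finite)
  have T: "distinct T" "set T = UNIV"
    using bij_betw_qenum[where 'n = 'n] unfolding T_def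
    by (auto simp: distinct_map atLeast0LessThan bij_betw_def)
  have "mset is = mset T"
    using set_eq_iff_mset_eq_distinct[OF True T(1)] set_is T(2) by simp
  then have "mset (map dq_vec is) = mset (dq_frame :: 'n jet list)"
    unfolding dq_frame_def T_def[symmetric] mset_map by (rule arg_cong)
  moreover have "length (dq_frame :: 'n jet list) = CARD('n)"
    by (simp add: dq_frame_def)
  ultimately have "\<bar>B (map dq_vec is)\<bar> = \<bar>B dq_frame\<bar>"
    using alternating_abs_eq_if_mset_eq[of dq_frame B "map dq_vec is"] assms(1,2) by simp
  with assms(3) show ?thesis by simp
qed

lemma vanishes_on_graphs_form_minus_vol:
  fixes A :: "'n::finite jet list \<Rightarrow> real"
  assumes "multilinear CARD('n) A" "alternating CARD('n) A"
    and "\<And>H is. \<forall>i j. H i j = H j i \<Longrightarrow> length is = CARD('n)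
      \<Longrightarrow> A (map (graph_vec dq_vec dp_vec H UNIV) is) = A (map dq_vec is)"
  shows "vanishes_on_graphs dq_vec dp_vec UNIV CARD('n) (\<lambda>vs. A vs - A dq_frame * dq_vol vs)"
proof -
  have "A (map dq_vec is) - A dq_frame * dq_vol (map dq_vec is) = 0"
    if "length is = CARD('n)" for "is"
  proof (rule alternating_dq_vec_eq_0[OF _ _ _ that])
    show "multilinear CARD('n) (\<lambda>vs. A vs - A dq_frame * dq_vol vs)"
      by (rule multilinear_diff_scaled[OF assms(1) multilinear_dq_vol])
    show "alternating CARD('n) (\<lambda>vs. A vs - A dq_frame * dq_vol vs)"
      using assms(2) alternating_dq_vol unfolding alternating_def by fastforce
  qed (simp add: dq_vol_dq_frame)
  moreover have "dq_vol (map (graph_vec dq_vec dp_vec H UNIV) is) = dq_vol (map dq_vec is)"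
    if "length is = CARD('n)" for H and "is" :: "'n list"
    using that by (intro dq_vol_cong) (simp_all add: graph_vec_dq_dp dq_vec_def)
  ultimately show ?thesis
    using assms(3) unfolding vanishes_on_graphs_def by simp
qed

lemma form_eq_dq_vol_if_vanishes_on_graphs:
  fixes A :: "'n::finite jet list \<Rightarrow> real"
  assumes "multilinear CARD('n) A" "alternating CARD('n) A"
    and reeb: "\<And>zs. length zs + 1 = CARD('n) \<Longrightarrow> A (reeb # zs) = 0"
    and "primitive dq_vec dp_vec UNIV CARD('n) A"
    and "\<And>H is. \<forall>i j. H i j = H j i \<Longrightarrow> length is = CARD('n)
      \<Longrightarrow> A (map (graph_vec dq_vec dp_vec H UNIV) is) = A (map dq_vec is)"
    and "length vs = CARD('n)"
  shows "A vs = A dq_frame * dq_vol vs"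
proof -
  define A' where "A' = (\<lambda>vs. A vs - A dq_frame * dq_vol vs)"
  let ?S = "range dq_vec \<union> range dp_vec :: 'n jet set"
  have m: "multilinear CARD('n) A'"
    unfolding A'_def by (rule multilinear_diff_scaled[OF assms(1) multilinear_dq_vol])
  have a: "alternating CARD('n) A'"
    using assms(2) alternating_dq_vol unfolding alternating_def A'_def by fastforce
  have "dq_vol (dq_vec \<mu> # dp_vec \<mu> # zs) = 0" if "length zs + 2 = CARD('n)" for \<mu> :: 'n and zs
    by (rule dq_vol_eq_0[of _ 1]) (use that in \<open>simp_all add: dp_vec_def\<close>)
  then have "primitive dq_vec dp_vec UNIV CARD('n) A'"
    using assms(4) by (simp add: primitive_def A'_def sum_subtractf)
  moreover have "vanishes_on_graphs dq_vec dp_vec UNIV CARD('n) A'"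
    unfolding A'_def by (rule vanishes_on_graphs_form_minus_vol[OF assms(1,2,5)])
  ultimately have "vanishes_on CARD('n) A' (span ?S)"
    using vanishes_on_span_if_primitive_and_vanishes_on_graphs[OF finite m a] by simp
  moreover have "vanishes_on k1 (\<lambda>zs. A' (reeb # zs)) (span ?S)" if "CARD('n) = Suc k1" for k1
  proof -
    have "A' (reeb # zs) = 0" if "length zs = k1" for zs
      using reeb dq_vol_eq_0[of "reeb # zs" 0] that \<open>CARD('n) = Suc k1\<close>
      by (simp add: A'_def reeb_def)
    then show ?thesis by (simp add: vanishes_on_def)
  qed
  ultimately have "vanishes_on CARD('n) A' (insert reeb (span ?S))"
    by (rule alternating_vanishes_on_insert[OF m a])
  then have "vanishes_on CARD('n) A' (insert reeb ?S)"
    by (rule vanishes_on_subset) (intro insert_mono span_superset)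
  then have "vanishes_on CARD('n) A' (span (insert reeb ?S))"
    by (rule multilinear_vanishes_on_span[OF m])
  then show ?thesis
    using assms(6) by (simp add: vanishes_on_def span_jet_frame A'_def)
qed

lemma first_order_graph_invariance:
  fixes \<omega> :: "'n::finite jet \<Rightarrow> 'n jet list \<Rightarrow> real"
  assumes "first_order U \<omega>" "q \<in> U" "\<forall>i j. H i j = H j i" "length is = CARD('n)"
  shows "\<omega> (q, u, p) (map (\<lambda>i. graph_vec dq_vec dp_vec H UNIV i + p $ i *\<^sub>R reeb) is)
       = \<omega> (q, u, p) (map (\<lambda>i. dq_vec i + p $ i *\<^sub>R reeb) is)"
proof -
  obtain F where F: "\<And>\<phi> q ws. Cinf_on U \<phi> \<Longrightarrow> q \<in> U \<Longrightarrow> length ws = CARD('n)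
      \<Longrightarrow> MA_op \<omega> \<phi> q ws = F (j1 \<phi> q) ws"
    using assms(1) unfolding first_order_def by blast
  have MA_graph: "\<omega> (q, u, p) (map (\<lambda>i. graph_vec dq_vec dp_vec H' UNIV i + p $ i *\<^sub>R reeb) is)
      = F (q, u, p) (map (\<lambda>i. axis i 1) is)" if H': "\<forall>i j. H' i j = H' j i" for H'
  proof -
    let ?\<phi> = "quadratic u p ((1/2) *\<^sub>R (\<chi> i j. H' i j)) q"
    have "transpose (\<chi> i j. H' i j) = (\<chi> i j. H' i j :: real^'n^'n)"
      using H' by (simp add: transpose_def)
    then have "j1 ?\<phi> q = (q, u, p)"
      by (rule tangent_j1_quadratic(1))
    moreover have "frechet_derivative (j1 ?\<phi>) (at q) (axis i 1)
        = graph_vec dq_vec dp_vec H' UNIV i + p $ i *\<^sub>R reeb" for i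
      by (rule tangent_j1_quadratic_axis[OF H'])
    ultimately have "MA_op \<omega> ?\<phi> q (map (\<lambda>i. axis i 1) is)
        = \<omega> (q, u, p) (map (\<lambda>i. graph_vec dq_vec dp_vec H' UNIV i + p $ i *\<^sub>R reeb) is)"
      unfolding MA_op_def map_map comp_def by simp
    then show ?thesis
      using F[OF Cinf_on_quadratic assms(2)] assms(4) \<open>j1 ?\<phi> q = (q, u, p)\<close> by simp
  qed
  show ?thesis
    using MA_graph[OF assms(3)] MA_graph[of "\<lambda>_ _. 0"] by (simp add: graph_vec_def)
qed

section \<open>Effective first-order Lagrangians\<close>

lemma form_at_point:
  assumes "is_form S k \<omega>" "x \<in> S"
  shows "multilinear k (\<omega> x)" "alternating k (\<omega> x)"
  using assms unfolding is_form_def multilinear_def alternating_def by blast+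

lemma effective_at_point:
  assumes "effective S k \<omega>" "x \<in> S"
  shows "\<And>zs. length zs + 1 = k \<Longrightarrow> \<omega> x (reeb # zs) = 0"
    and "primitive dq_vec dp_vec UNIV k (\<omega> x)"
  using assms by (auto simp: effective_def primitive_def bot_op_def interior_def)

lemma effective_first_order_graph_invariance:
  fixes \<omega> :: "'n::finite jet \<Rightarrow> 'n jet list \<Rightarrow> real"
  assumes "is_form (J1 U) CARD('n) \<omega>" "effective (J1 U) CARD('n) \<omega>" "first_order U \<omega>"
    and "x \<in> J1 U" "\<forall>i j. H i j = H j i" "length is = CARD('n)"
  shows "\<omega> x (map (graph_vec dq_vec dp_vec H UNIV) is) = \<omega> x (map dq_vec is)"
proof -
  obtain q u p where x: "x = (q, u, p)" and q: "q \<in> U"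
    using assms(4) by (auto simp: J1_def)
  have shift: "\<omega> x (map (\<lambda>i. g i + c i *\<^sub>R reeb) is) = \<omega> x (map g is)" for g c
    by (rule alternating_shift_by_null_vector)
      (use form_at_point[OF assms(1,4)] effective_at_point(1)[OF assms(2,4)] assms(6) in simp_all)
  show ?thesis
    using first_order_graph_invariance[OF assms(3) q assms(5,6), of u p]
    unfolding x[symmetric] shift .
qed

theorem mainTheorem2:
  fixes U :: "(real^'n::finite) set"
    and \<omega> :: "'n jet \<Rightarrow> 'n jet list \<Rightarrow> real"
  assumes "open U"
    and "is_form (J1 U) CARD('n) \<omega>"
    and "effective (J1 U) CARD('n) \<omega>"
    and "first_order U \<omega>"
  shows "\<exists>L. Cinf_on (J1 U) L \<and>
           (\<forall>x\<in>J1 U. \<forall>vs. length vs = CARD('n) \<longrightarrow> \<omega> x vs = L x * dq_vol vs)"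
proof (intro exI conjI ballI allI impI)
  show "Cinf_on (J1 U) (\<lambda>x. \<omega> x dq_frame)"
    using assms(2) unfolding is_form_def by (simp add: dq_frame_def)
  fix x and vs :: "'n jet list"
  assume x: "x \<in> J1 U" and vs: "length vs = CARD('n)"
  show "\<omega> x vs = \<omega> x dq_frame * dq_vol vs"
    by (rule form_eq_dq_vol_if_vanishes_on_graphs[OF form_at_point[OF assms(2) x]
          effective_at_point[OF assms(3) x] effective_first_order_graph_invariance[OF assms(2-4) x] vs])
qed

end
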